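(* Let $p\in(0,1)$, $d\ge2$ and $N\ge1$ be integers (with $p$ real), $t\in\mathbb{Z}_{\ge0}$, and $y_i=-d(i-1)$, $i=1,\dots,N$. For integers $k\ge0$ and $x\in\mathbb{Z}$ let $$F_{-k}(x,t)=(1-p)^t\frac{(-1)^k}{2\pi i}\oint_{\Gamma_0}\frac{dw}{w}\Big(1+\frac{p}{1-p}w\Big)^t\frac{(1-w)^k}{w^{x+k}},$$ and for $1\le n\le N$, $0\le k\le n-1$, let $\Psi^n_k(x)=(-1)^kF_{-k}(x-y_{n-k},t)$. Put $z=x+d(n-1)$. Then $$\Psi^n_k(x)=\frac{(-1)^k}{2\pi i}\oint_{\Gamma_0}\frac{dw}{w^{z+1}}(1+p(w-1))^t\big((w-1)w^{d-1}\big)^k,$$ and the functions $$\Phi^n_k(x)=\frac{(-1)^k}{2\pi i}\oint_{\Gamma_0}\frac{dv}{v}\,\frac{1+dv}{(1+pv)^t}\,\frac{(1+v)^{z-1}}{(v(1+v)^{d-1})^k},\qquad k=0,\dots,n-1,$$ are polynomials in $x$ of degree at most $n-1$ satisfying $\sum_{x\in\mathbb{Z}}\Phi^n_j(x)\Psi^n_k(x)=\delta_{j,k}$ for $0\le j,k\le n-1$.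
   Context: $\Gamma_0$ denotes any anticlockwise simple loop enclosing only the pole at $0$ of the respective integrand (in particular not enclosing $w=1$, $v=-1$, or $v=-1/p$). *)

theory Defs
  imports "HOL-Complex_Analysis.Complex_Analysis"
begin

text \<open>The normalised contour integral (1/(2 pi i)) over Gamma_0 (an anticlockwise simple loop
  enclosing only the pole at 0) equals the residue at 0; Isabelle's residue is literally
  defined as the normalised integral over small circles around 0.\<close>

definition Fneg :: "real \<Rightarrow> nat \<Rightarrow> nat \<Rightarrow> int \<Rightarrow> complex" where
  "Fneg p t k x = complex_of_real ((1 - p) ^ t) * (-1) ^ k *
     residue (\<lambda>w. (1 / w) * (1 + complex_of_real (p / (1 - p)) * w) ^ t * (1 - w) ^ k
                    / w powi (x + int k)) 0"

definition yy :: "nat \<Rightarrow> nat \<Rightarrow> int" where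
  "yy d i = - int d * (int i - 1)"

definition Psi :: "real \<Rightarrow> nat \<Rightarrow> nat \<Rightarrow> nat \<Rightarrow> nat \<Rightarrow> int \<Rightarrow> complex" where
  "Psi p d t n k x = (-1) ^ k * Fneg p t k (x - yy d (n - k))"

definition Phi :: "real \<Rightarrow> nat \<Rightarrow> nat \<Rightarrow> nat \<Rightarrow> nat \<Rightarrow> int \<Rightarrow> complex" where
  "Phi p d t n k x = (let z = x + int d * (int n - 1) in
     (-1) ^ k * residue (\<lambda>v. (1 / v) * (1 + of_nat d * v) / (1 + complex_of_real p * v) ^ t
        * (1 + v) powi (z - 1) / (v * (1 + v) ^ (d - 1)) ^ k) 0)"

end

theory Submission
  imports Defs
begin

(*
  Both families are coefficient extractions, with z = x + d(n-1).  Up to the sign (-1)^k,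
  Psi^n_k(x) is the coefficient of w^z in the polynomial A_k(w) = (1 + p(w-1))^t ((w-1) w^(d-1))^k;
  up to the sign (-1)^j, Phi^n_j(x) is the coefficient of v^j in G_j(v) (1+v)^z, where
  G_j(v) = (1 + dv) (1 + pv)^(-t) (1+v)^(-1-(d-1)j).  The coefficients of (1+v)^a are the binomial
  coefficients (a gchoose i), polynomials of degree i in a, so Phi^n_j is a polynomial in x of
  degree at most j.

  As Psi^n_k has finite support, the sum over x of Phi^n_j Psi^n_k is, up to the sign (-1)^(j+k),
  the coefficient of v^j in G_j(v) A_k(1+v) = G_j(v) (1 + pv)^t v^k (1+v)^((d-1)k), i.e. that of
  v^(j-k) in (1 + dv) (1+v)^(-(d-1)(j-k)-1).  This is 0 for j < k and 1 for j = k; for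
  j - k = m + 1 > 0 it vanishes because (m+1) (a gchoose (m+1)) = (a - m) (a gchoose m) and
  a - m + d(m+1) = 0 for a = -(d-1)(m+1) - 1.
*)

unbundle no vec_syntax
unbundle fps_syntax

lemma has_fps_expansion_one_plus_powi [fps_expansion_intros]:
  "(\<lambda>z::complex. (1 + z) powi m) has_fps_expansion fps_binomial (of_int m)"
proof -
  have "eventually (\<lambda>z::complex. z \<in> ball 0 1) (nhds 0)"
    by (intro eventually_nhds_in_open) auto
  then have eq: "eventually (\<lambda>z::complex. (1 + z) powr of_int m = (1 + z) powi m) (nhds 0)"
  proof eventually_elim
    case (elim z)
    then have "1 + z \<noteq> 0"
      by (auto simp: add_eq_0_iff)
    then show ?case by (simp add: complex_powr_of_int)
  qed
  show ?thesis
    using has_fps_expansion_cong[OF eq refl] has_fps_expansion_binomial_complex by blast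
qed

lemma residue_poly_divide_powi:
  fixes P :: "complex poly"
  shows "residue (\<lambda>w. poly P w / w powi e) 0 = (if e \<ge> 1 then coeff P (nat (e - 1)) else 0)"
proof -
  have "(\<lambda>w. poly P w / w powi e) has_laurent_expansion fps_to_fls (fps_of_poly P) / fls_X_intpow e"
    by (intro laurent_expansion_intros has_laurent_expansion_fps)
       (simp add: has_fps_expansion_def)
  moreover have "fps_to_fls (fps_of_poly P) / fls_X_intpow e = fls_shift e (fps_to_fls (fps_of_poly P))"
    by (simp add: fls_divide_X_intpow)
  ultimately show ?thesis
    using has_laurent_expansion_residue_0 by simp
qed

lemma fps_nth_linear_times_binomial_eq_0:
  fixes c :: "'a :: field_char_0"
  assumes "a = of_nat m - c * of_nat (Suc m)"
  shows "((1 + fps_const c * fps_X) * fps_binomial a) $ Suc m = 0"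
proof -
  have "of_nat (Suc m) * ((a gchoose Suc m) + c * (a gchoose m))
      = (a - of_nat m + c * of_nat (Suc m)) * (a gchoose m)"
    using gbinomial_mult_1[of a m] by (simp add: algebra_simps)
  also have "\<dots> = 0" using assms by simp
  finally show ?thesis
    by (simp add: distrib_right mult.assoc del: of_nat_Suc)
qed

lemma fps_nth_times_binomial_polynomial:
  fixes G :: "'a :: field_char_0 fps"
  shows "\<exists>P. degree P \<le> k \<and> (\<forall>y. (G * fps_binomial (y + c)) $ k = poly P y)"
proof (intro exI conjI allI)
  define Q where "Q j = smult (inverse (fact j)) (\<Prod>l<j. [:c - of_nat l, 1:])" for j
  have degree_Q: "degree (Q j) \<le> j" for j
  proof -
    have "degree (\<Prod>l<j. [:c - of_nat l, 1:]) \<le> (\<Sum>l<j. degree [:c - of_nat l, 1 :: 'a:])"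
      using degree_prod_sum_le[of "{..<j}" "\<lambda>l. [:c - of_nat l, 1:]"] by (simp add: o_def)
    then show ?thesis by (simp add: Q_def)
  qed
  have poly_Q: "poly (Q j) y = (y + c) gchoose j" for j y
    by (simp add: Q_def gbinomial_prod_rev poly_prod atLeast0LessThan field_simps)
  define P where "P = (\<Sum>i\<le>k. smult (G $ i) (Q (k - i)))"
  show "degree P \<le> k"
    unfolding P_def
    by (intro degree_sum_le order.trans[OF degree_smult_le]) (auto intro: le_trans[OF degree_Q])
  show "(G * fps_binomial (y + c)) $ k = poly P y" for y
    by (simp add: P_def fps_mult_nth poly_sum poly_Q atLeast0AtMost)
qed

lemma pcompose_power: "pcompose (p ^ n) q = pcompose p q ^ n"
  for p q :: "'a :: comm_semiring_1 poly"
  by (induction n) (simp_all add: pcompose_1 pcompose_mult)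

lemma fps_nth_times_pcompose_one_plus_X:
  fixes A :: "'a :: comm_ring_1 poly"
  shows "(H * fps_of_poly (pcompose A [:1, 1:])) $ j
           = (\<Sum>i\<le>degree A. coeff A i * (H * (1 + fps_X) ^ i) $ j)"
proof -
  have "fps_of_poly (pcompose A [:1, 1:]) = (\<Sum>i\<le>degree A. fps_const (coeff A i) * (1 + fps_X) ^ i)"
    unfolding pcompose_altdef poly_altdef
    by (simp add: degree_map_poly coeff_map_poly fps_of_poly_sum fps_of_poly_smult fps_of_poly_power
                  fps_of_poly_pCons)
  then show ?thesis
    by (simp add: sum_distrib_left fps_sum_nth mult.left_commute[of H])
qed

lemma Psi_eq_residue:
  assumes "p < 1" "d \<ge> 1" "k < n"
  shows "Psi p d t n k x = (-1) ^ k * residue (\<lambda>w. (1 + complex_of_real p * (w - 1)) ^ t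
           * ((w - 1) * w ^ (d - 1)) ^ k / w powi (x + int d * (int n - 1) + 1)) 0"
proof -
  define e where "e = x - yy d (n - k) + int k"
  define c where "c = (-1) ^ k * complex_of_real ((1 - p) ^ t)"
  define f where
    "f = (\<lambda>w. (1 / w) * (1 + complex_of_real (p / (1 - p)) * w) ^ t * (1 - w) ^ k / w powi e)"
  have exponent: "x + int d * (int n - 1) + 1 = e + 1 + int ((d - 1) * k)"
    using assms unfolding e_def yy_def by (simp add: algebra_simps)
  have rescale: "complex_of_real (1 - p) * (1 + complex_of_real (p / (1 - p)) * w)
                   = 1 + complex_of_real p * (w - 1)" for w
    using assms(1) by (simp add: field_simps)
  have "(1 + complex_of_real p * (w - 1)) ^ t * ((w - 1) * w ^ (d - 1)) ^ k
          / w powi (x + int d * (int n - 1) + 1) = c * f w" if "w \<noteq> 0" for w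
  proof -
    have "w powi (x + int d * (int n - 1) + 1) = w powi e * w * w ^ ((d - 1) * k)"
      using that unfolding exponent by (simp add: power_int_add del: of_nat_mult)
    moreover have "((w - 1) * w ^ (d - 1)) ^ k = (-1) ^ k * (1 - w) ^ k * w ^ ((d - 1) * k)"
      using power_mult_distrib[of "-1" "1 - w" k] unfolding power_mult by (simp add: power_mult_distrib)
    moreover have "(1 + complex_of_real p * (w - 1)) ^ t
        = complex_of_real ((1 - p) ^ t) * (1 + complex_of_real (p / (1 - p)) * w) ^ t"
      by (simp flip: rescale power_mult_distrib)
    ultimately show ?thesis
      using that unfolding c_def f_def by (simp add: field_simps)
  qed
  then have "residue (\<lambda>w. (1 + complex_of_real p * (w - 1)) ^ t * ((w - 1) * w ^ (d - 1)) ^ k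
               / w powi (x + int d * (int n - 1) + 1)) 0 = residue (\<lambda>w. c * f w) 0"
    by (intro residue_cong) (auto simp: eventually_at_filter intro: always_eventually)
  also have "\<dots> = c * residue f 0"
    unfolding f_def by (rule residue_lmul[of UNIV]) (auto intro!: holomorphic_intros)
  finally show ?thesis
    by (simp add: Psi_def Fneg_def c_def f_def e_def)
qed

definition Psi_poly :: "real \<Rightarrow> nat \<Rightarrow> nat \<Rightarrow> nat \<Rightarrow> complex poly" where
  "Psi_poly p d t k = [:1 - complex_of_real p, complex_of_real p:] ^ t * ([:-1, 1:] * [:0, 1:] ^ (d - 1)) ^ k"

lemma poly_Psi_poly:
  "poly (Psi_poly p d t k) w = (1 + complex_of_real p * (w - 1)) ^ t * ((w - 1) * w ^ (d - 1)) ^ k"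
  by (simp add: Psi_poly_def algebra_simps)

lemma Psi_eq_coeff:
  assumes "p < 1" "d \<ge> 1" "k < n"
  shows "Psi p d t n k x = (-1) ^ k * (if x + int d * (int n - 1) \<ge> 0
           then coeff (Psi_poly p d t k) (nat (x + int d * (int n - 1))) else 0)"
proof -
  have "Psi p d t n k x = (-1) ^ k * residue (\<lambda>w. poly (Psi_poly p d t k) w
          / w powi (x + int d * (int n - 1) + 1)) 0"
    unfolding Psi_eq_residue[OF assms] poly_Psi_poly ..
  then show ?thesis by (simp add: residue_poly_divide_powi)
qed

lemma fps_of_poly_Psi_poly_shifted:
  "fps_of_poly (pcompose (Psi_poly p d t k) [:1, 1:])
     = (1 + fps_const (complex_of_real p) * fps_X) ^ t * (fps_X * (1 + fps_X) ^ (d - 1)) ^ k"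
proof -
  have "pcompose [:1 - complex_of_real p, complex_of_real p:] [:1, 1:] = [:1, complex_of_real p:]"
    and "pcompose [:-1, 1:] [:1, 1:] = [:0, 1 :: complex:]"
    and "pcompose [:0, 1:] [:1, 1:] = [:1, 1 :: complex:]"
    by (simp_all add: pcompose_pCons)
  then show ?thesis
    unfolding Psi_poly_def pcompose_mult pcompose_power
    by (simp add: fps_of_poly_mult fps_of_poly_power fps_of_poly_pCons)
qed

definition Phi_gen :: "real \<Rightarrow> nat \<Rightarrow> nat \<Rightarrow> complex fps" where
  "Phi_gen p d t = (1 + fps_const (of_nat d) * fps_X) / (1 + fps_const (complex_of_real p) * fps_X) ^ t"

lemma Phi_eq_fps_nth:
  "Phi p d t n k x = (-1) ^ k *
     (Phi_gen p d t * fps_binomial (of_int (x + int d * (int n - 1) - 1 - int (d - 1) * int k))) $ k"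
proof -
  define m where "m = x + int d * (int n - 1) - 1 - int (d - 1) * int k"
  define h where "h = (\<lambda>v. (1 + of_nat d * v) / (1 + complex_of_real p * v) ^ t * (1 + v) powi m)"
  have "eventually (\<lambda>v. v \<in> ball 0 1 \<and> v \<noteq> 0) (at (0 :: complex))"
    using eventually_at_ball'[of 1 "0 :: complex" UNIV] by (simp only: UNIV_I simp_thms)
  moreover have "eventually (\<lambda>v. 1 + complex_of_real p * v \<noteq> 0) (at 0)"
    by (rule tendsto_imp_eventually_ne[where c = 1]) (auto intro!: tendsto_eq_intros)
  ultimately have "eventually (\<lambda>v. (1 / v) * (1 + of_nat d * v) / (1 + complex_of_real p * v) ^ t
      * (1 + v) powi (x + int d * (int n - 1) - 1) / (v * (1 + v) ^ (d - 1)) ^ k = h v / v ^ Suc k) (at 0)"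
  proof eventually_elim
    case (elim v)
    then have "1 + v \<noteq> 0" by (auto simp: add_eq_0_iff)
    moreover have "x + int d * (int n - 1) - 1 = m + int ((d - 1) * k)"
      by (simp add: m_def)
    ultimately have "(1 + v) powi (x + int d * (int n - 1) - 1) = (1 + v) powi m * (1 + v) ^ ((d - 1) * k)"
      by (simp add: power_int_add del: of_nat_mult)
    with \<open>1 + v \<noteq> 0\<close> elim show ?case
      unfolding h_def by (simp add: field_simps flip: power_mult)
  qed
  then have "residue (\<lambda>v. (1 / v) * (1 + of_nat d * v) / (1 + complex_of_real p * v) ^ t
          * (1 + v) powi (x + int d * (int n - 1) - 1) / (v * (1 + v) ^ (d - 1)) ^ k) 0
        = residue (\<lambda>v. h v / v ^ Suc k) 0"
    by (rule residue_cong) simp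
  also have "\<dots> = (Phi_gen p d t * fps_binomial (of_int m)) $ k"
    unfolding h_def Phi_gen_def by (intro residue_fps_expansion_over_power_at_0 fps_expansion_intros) auto
  finally show ?thesis
    by (simp add: Phi_def m_def)
qed

lemma Phi_polynomial:
  "\<exists>P. degree P \<le> k \<and> (\<forall>x::int. Phi p d t n k x = poly P (of_int x))"
proof -
  obtain P where "degree P \<le> k"
    and P: "\<And>y. (Phi_gen p d t * fps_binomial (y + of_int (int d * (int n - 1) - 1 - int (d - 1) * int k))) $ k
                  = poly P y"
    using fps_nth_times_binomial_polynomial by blast
  have "Phi p d t n k x = poly (smult ((-1) ^ k) P) (of_int x)" for x
    using P[of "of_int x"] by (simp add: Phi_eq_fps_nth add_diff_eq)
  with \<open>degree P \<le> k\<close> show ?thesis by (intro exI[of _ "smult ((-1) ^ k) P"]) auto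
qed

definition Phi_series :: "real \<Rightarrow> nat \<Rightarrow> nat \<Rightarrow> nat \<Rightarrow> complex fps" where
  "Phi_series p d t j = Phi_gen p d t * fps_binomial (of_int (- 1 - int (d - 1) * int j))"

lemma Phi_eq_fps_nth_shifted:
  "Phi p d t n j (int i - int d * (int n - 1)) = (-1) ^ j * (Phi_series p d t j * (1 + fps_X) ^ i) $ j"
proof -
  have "of_int (int i - int d * (int n - 1) + int d * (int n - 1) - 1 - int (d - 1) * int j)
      = of_nat i + (of_int (- 1 - int (d - 1) * int j) :: complex)"
    by simp
  then have "fps_binomial
        (of_int (int i - int d * (int n - 1) + int d * (int n - 1) - 1 - int (d - 1) * int j))
      = (1 + fps_X) ^ i * fps_binomial (of_int (- 1 - int (d - 1) * int j) :: complex)"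
    by (simp only: fps_binomial_add_mult fps_binomial_of_nat)
  then show ?thesis
    unfolding Phi_eq_fps_nth Phi_series_def by (simp only: mult_ac)
qed

lemma Phi_series_times_Psi_poly_shifted:
  "Phi_series p d t j * fps_of_poly (pcompose (Psi_poly p d t k) [:1, 1:])
     = fps_X ^ k * ((1 + fps_const (of_nat d) * fps_X)
         * fps_binomial (of_int (int (d - 1) * (int k - int j) - 1)))"
proof -
  define Q where "Q = (1 + fps_const (complex_of_real p) * fps_X) ^ t"
  have "of_int (int (d - 1) * (int k - int j) - 1)
      = of_int (- 1 - int (d - 1) * int j) + (of_nat ((d - 1) * k) :: complex)"
    by (simp add: left_diff_distrib right_diff_distrib mult.commute)
  then have binomial: "fps_binomial (of_int (- 1 - int (d - 1) * int j)) * ((1 + fps_X) ^ (d - 1)) ^ k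
      = fps_binomial (of_int (int (d - 1) * (int k - int j) - 1) :: complex)"
    by (simp only: fps_binomial_add_mult fps_binomial_of_nat power_mult)
  have "Phi_series p d t j = (1 + fps_const (of_nat d) * fps_X) * inverse Q
      * fps_binomial (of_int (- 1 - int (d - 1) * int j))"
    unfolding Phi_series_def Phi_gen_def Q_def by (simp add: fps_divide_unit)
  then have "Phi_series p d t j * fps_of_poly (pcompose (Psi_poly p d t k) [:1, 1:])
      = (inverse Q * Q) * (fps_X ^ k * ((1 + fps_const (of_nat d) * fps_X)
          * (fps_binomial (of_int (- 1 - int (d - 1) * int j)) * ((1 + fps_X) ^ (d - 1)) ^ k)))"
    unfolding fps_of_poly_Psi_poly_shifted Q_def[symmetric] by (simp only: power_mult_distrib mult_ac)
  moreover have "inverse Q * Q = 1"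
    unfolding Q_def by (intro inverse_mult_eq_1) simp
  ultimately show ?thesis
    unfolding binomial by simp
qed

lemma Phi_Psi_pairing_nth:
  assumes "d \<ge> 1"
  shows "(fps_X ^ k * ((1 + fps_const (of_nat d) * fps_X)
            * fps_binomial (of_int (int (d - 1) * (int k - int j) - 1) :: complex))) $ j
         = (if j = k then 1 else 0)"
proof (cases "k < j")
  case True
  then obtain m where j: "j = k + Suc m" using less_imp_Suc_add by fastforce
  have "of_int (int (d - 1) * (int k - int j) - 1) = of_nat m - of_nat d * (of_nat (Suc m) :: complex)"
    using assms unfolding j by (simp add: algebra_simps)
  then have "((1 + fps_const (of_nat d) * fps_X)
               * fps_binomial (of_int (int (d - 1) * (int k - int j) - 1) :: complex)) $ Suc m = 0"
    by (rule fps_nth_linear_times_binomial_eq_0)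
  then show ?thesis using True by (simp add: fps_X_power_mult_nth j)
next
  case False
  then show ?thesis by (cases "j = k") (simp_all add: fps_X_power_mult_nth)
qed

lemma sum_Phi_times_Psi:
  assumes "p < 1" "d \<ge> 1" "j < n" "k < n"
  shows "(\<Sum>i\<le>degree (Psi_poly p d t k). Phi p d t n j (int i - int d * (int n - 1))
           * Psi p d t n k (int i - int d * (int n - 1))) = (if j = k then 1 else 0)"
proof -
  have "(\<Sum>i\<le>degree (Psi_poly p d t k). Phi p d t n j (int i - int d * (int n - 1))
           * Psi p d t n k (int i - int d * (int n - 1)))
      = (-1) ^ (j + k) * (\<Sum>i\<le>degree (Psi_poly p d t k).
           coeff (Psi_poly p d t k) i * (Phi_series p d t j * (1 + fps_X) ^ i) $ j)"
    by (simp add: Phi_eq_fps_nth_shifted Psi_eq_coeff[OF assms(1,2,4)] sum_distrib_left power_add mult_ac)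
  also have "\<dots> = (-1) ^ (j + k)
      * (Phi_series p d t j * fps_of_poly (pcompose (Psi_poly p d t k) [:1, 1:])) $ j"
    by (simp only: fps_nth_times_pcompose_one_plus_X)
  also have "\<dots> = (-1) ^ (j + k) * (if j = k then 1 else 0)"
    unfolding Phi_series_times_Psi_poly_shifted Phi_Psi_pairing_nth[OF assms(2)] ..
  also have "\<dots> = (if j = k then 1 else 0)"
    by (simp flip: mult_2 add: power_mult)
  finally show ?thesis .
qed

lemma Phi_Psi_biorthogonal:
  assumes "p < 1" "d \<ge> 1" "j < n" "k < n"
  shows "((\<lambda>x::int. Phi p d t n j x * Psi p d t n k x) has_sum (if j = k then 1 else 0)) UNIV"
proof -
  define D where "D = int d * (int n - 1)"
  define S where "S = (\<lambda>i. int i - D) ` {..degree (Psi_poly p d t k)}"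
  define f where "f = (\<lambda>x. Phi p d t n j x * Psi p d t n k x)"
  have "f x = 0" if "x \<notin> S" for x
  proof (cases "x + D \<ge> 0")
    case True
    have "degree (Psi_poly p d t k) < nat (x + D)"
    proof (rule ccontr)
      assume "\<not> degree (Psi_poly p d t k) < nat (x + D)"
      then have "x \<in> S" unfolding S_def using True by (intro image_eqI[of _ _ "nat (x + D)"]) auto
      with that show False by simp
    qed
    then show ?thesis
      using True by (simp add: f_def Psi_eq_coeff[OF assms(1,2,4)] D_def coeff_eq_0)
  qed (simp add: f_def Psi_eq_coeff[OF assms(1,2,4)] D_def)
  then have "(f has_sum s) UNIV \<longleftrightarrow> (f has_sum s) S" for s
    by (intro has_sum_cong_neutral) auto
  moreover have "inj_on (\<lambda>i. int i - D) {..degree (Psi_poly p d t k)}"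
    by (auto simp: inj_on_def)
  then have "sum f S = (if j = k then 1 else 0)"
    unfolding S_def f_def D_def by (simp add: sum.reindex sum_Phi_times_Psi[OF assms])
  ultimately show ?thesis
    using has_sum_finite[of S f] unfolding S_def f_def by simp
qed

theorem lemma4p1:
  fixes p :: real and d N t :: nat
  assumes "0 < p" "p < 1" "d \<ge> 2" "N \<ge> 1"
  shows "\<forall>n\<in>{1..N}.
     (\<forall>k<n. \<forall>x::int.
        Psi p d t n k x =
          (-1) ^ k * residue (\<lambda>w. (1 + complex_of_real p * (w - 1)) ^ t * ((w - 1) * w ^ (d - 1)) ^ k
                      / w powi (x + int d * (int n - 1) + 1)) 0)
   \<and> (\<forall>k<n. \<exists>P :: complex poly. degree P \<le> n - 1 \<and> (\<forall>x::int. Phi p d t n k x = poly P (of_int x)))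
   \<and> (\<forall>j<n. \<forall>k<n. ((\<lambda>x::int. Phi p d t n j x * Psi p d t n k x) has_sum (if j = k then 1 else 0)) UNIV)"
proof -
  have "d \<ge> 1" using assms(3) by simp
  moreover have "\<exists>P. degree P \<le> n - 1 \<and> (\<forall>x::int. Phi p d t n k x = poly P (of_int x))"
    if "k < n" for n k
  proof -
    obtain P where "degree P \<le> k" "\<forall>x::int. Phi p d t n k x = poly P (of_int x)"
      using Phi_polynomial by blast
    with that show ?thesis by (intro exI[of _ P]) auto
  qed
  ultimately show ?thesis
    using Psi_eq_residue[OF assms(2)] Phi_Psi_biorthogonal[OF assms(2)] by auto
qed

end
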